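(* Let $1\le j<n$ with $\gcd(n,j)=1$ and $k=n-j$. Let $\phi$ be the Drinfeld module over $L$ with $\phi_T=-\tau^n+g\tau^j+1$ ($g\in L$), and let $\lambda=\tau^k-a$ with $a\in L^\times$. Then there exists a Drinfeld $A$-module $\psi$ of characteristic $T-1$ over $L$ such that $\lambda$ is an isogeny from $\phi$ to $\psi$ if and only if $$\frac{1}{a}\,g^{q^k}-\frac{1}{a^{q^j}}\,g-a^{q^n-1}+1=0 .$$ In that case $\psi_T=-\tau^n+h\tau^j+1$ with $h=-a^{q^n}+a+g^{q^k}$.
   Context: $q$ is a prime power, $A=\mathbb{F}_q[T]$, $L$ is a field containing $\mathbb{F}_q$ with an $\mathbb{F}_q$-algebra homomorphism $\iota:A\to L$ whose kernel is $(T-1)$ (so $\iota(T)=1$). $L\{\tau\}$ is the twisted polynomial ring of additive polynomials over $L$, with $\tau$ the $q$-Frobenius, so $\tau c=c^q\tau$ for $c\in L$; for $f=a_0+a_1\tau+\dots$ set $D(f)=a_0$. A Drinfeld $A$-module of characteristic $T-1$ over $L$ is an $\mathbb{F}_q$-algebra homomorphism $\phi:A\to L\{\tau\}$, $a\mapsto\phi_a$, with $D\circ\phi=\iota$ and $\phi_a\ne\iota(a)$ for some $a$; it is determined by $\phi_T$. An isogeny $\lambda:\phi\to\psi$ over $L$ is $\lambda\in L\{\tau\}$ with $\lambda\phi_a=\psi_a\lambda$ for all $a\in A$ (equivalently for $a=T$). *)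

theory Defs
  imports "HOL-Computational_Algebra.Primes"
begin

text \<open>The field L is a type 'a of class field containing F_q: q = p^m with p = char L,
  and x^q - x has exactly q roots in L.  Elements of the twisted polynomial ring L{tau}
  are coefficient sequences f :: nat => 'a with finite support (f i = coefficient of tau^i).\<close>

definition contains_Fq :: "nat \<Rightarrow> 'a::field itself \<Rightarrow> bool" where
  "contains_Fq q TYPE('a) \<longleftrightarrow>
     (\<exists>p m. prime p \<and> m \<ge> 1 \<and> q = p ^ m \<and> CHAR('a) = p) \<and>
     card {x::'a. x ^ q = x} = q"

definition is_tpoly :: "(nat \<Rightarrow> 'a::field) \<Rightarrow> bool" where
  "is_tpoly f \<longleftrightarrow> finite {i. f i \<noteq> 0}"

text \<open>Multiplication in L{tau}: tau c = c^q tau, so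
  (sum f_i tau^i)(sum g_j tau^j) = sum_n (sum_{i<=n} f_i g_{n-i}^(q^i)) tau^n.\<close>
definition tmul :: "nat \<Rightarrow> (nat \<Rightarrow> 'a::field) \<Rightarrow> (nat \<Rightarrow> 'a) \<Rightarrow> (nat \<Rightarrow> 'a)" where
  "tmul q f g = (\<lambda>n. \<Sum>i\<le>n. f i * (g (n - i)) ^ (q ^ i))"

definition tmon :: "'a::field \<Rightarrow> nat \<Rightarrow> (nat \<Rightarrow> 'a)" where
  "tmon c i = (\<lambda>m. if m = i then c else 0)"

text \<open>A Drinfeld A-module of characteristic T-1 over L, A = F_q[T], is determined by
  its value psi_T, which can be any element of L{tau} with constant term iota(T) = 1
  that is not a constant (the condition psi_a \<noteq> iota(a) for some a is equivalent to
  psi_T \<noteq> iota(T)).  We represent the module by psi_T.\<close>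
definition drinfeld_T :: "(nat \<Rightarrow> 'a::field) \<Rightarrow> bool" where
  "drinfeld_T psiT \<longleftrightarrow> is_tpoly psiT \<and> psiT 0 = 1 \<and> psiT \<noteq> tmon 1 0"

definition is_isogeny :: "nat \<Rightarrow> (nat \<Rightarrow> 'a::field) \<Rightarrow> (nat \<Rightarrow> 'a) \<Rightarrow> (nat \<Rightarrow> 'a) \<Rightarrow> bool" where
  "is_isogeny q lam phiT psiT \<longleftrightarrow> is_tpoly lam \<and> tmul q lam phiT = tmul q psiT lam"

end

theory Submission imports Defs begin

(* Comparing coefficients, multiplication by lambda on either side is explicit:
     (lambda f)_m = -a f_m + f_(m-k)^(q^k)   and   (f lambda)_m = f_(m-k) - f_m a^(q^m).
   For the candidate psi0 = -tau^n + h tau^j + 1, h = -a^(q^n) + a + g^(q^k), a direct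
   computation shows that lambda phi_T - psi0 lambda equals E tau^j with
   E = h a^(q^j) - a g, and the condition of the theorem is E = 0 divided by a a^(q^j).
   If psi_T is any target of the isogeny, then d = psi_T - psi0 satisfies
   d lambda = E tau^j.  But for d nonzero, d lambda has nonzero coefficients both at the
   lowest index of d and at k plus the highest index of d, two different indices; hence
   d = 0 and then E = 0.  Conversely, if E = 0 then psi0 itself is a Drinfeld module and
   lambda an isogeny onto it. *)

lemma Fq_pos:
  assumes "contains_Fq q TYPE('a::field)"
  shows "q > 0"
  using assms prime_gt_0_nat unfolding contains_Fq_def by fastforce

text \<open>Raising to a power of q commutes with negation, since (-1)^q = -1 both in
  characteristic 2 (where -1 = 1) and for odd q.  This is what makes the constant
  -a of lambda twist to -a^(q^i).\<close>
lemma minus_one_power_Fq: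
  assumes "contains_Fq q TYPE('a::field)"
  shows "(-1::'a) ^ (q ^ i) = -1"
proof -
  obtain p m where pm: "prime p" "q = p ^ m" "CHAR('a) = p"
    using assms unfolding contains_Fq_def by blast
  show ?thesis
  proof (cases "p = 2")
    case True
    have "(2::'a) = 0"
      using of_nat_CHAR[where 'a='a] pm(3) True by simp
    then have "(1::'a) + 1 = 0"
      by simp
    then have minus_one: "(-1::'a) = 1"
      by (metis add_eq_0_iff)
    show ?thesis
      unfolding minus_one by simp
  next
    case False
    then have "odd p"
      using prime_odd_nat[OF pm(1)] prime_ge_2_nat[OF pm(1)] by simp
    then have "odd (q ^ i)"
      using pm(2) by simp
    then show ?thesis by simp
  qed
qed

lemma minus_power_Fq:
  assumes "contains_Fq q TYPE('a::field)"
  shows "(- c :: 'a) ^ (q ^ i) = - (c ^ (q ^ i))"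
proof -
  have "(- c) ^ (q ^ i) = (-1) ^ (q ^ i) * c ^ (q ^ i)"
    by (simp flip: power_mult_distrib)
  then show ?thesis
    using minus_one_power_Fq[OF assms] by simp
qed

lemma is_tpoly_tmon: "is_tpoly (tmon c i)"
  unfolding is_tpoly_def tmon_def
  by (rule finite_subset[of _ "{i}"]) auto

lemma is_tpoly_add:
  "is_tpoly f \<Longrightarrow> is_tpoly g \<Longrightarrow> is_tpoly (\<lambda>m. f m + g m)"
  unfolding is_tpoly_def
  by (rule finite_subset[of _ "{i. f i \<noteq> 0} \<union> {i. g i \<noteq> 0}"]) auto

lemma is_tpoly_diff:
  "is_tpoly f \<Longrightarrow> is_tpoly g \<Longrightarrow> is_tpoly (\<lambda>m. f m - g m)"
  unfolding is_tpoly_def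
  by (rule finite_subset[of _ "{i. f i \<noteq> 0} \<union> {i. g i \<noteq> 0}"]) auto

lemma tmul_diff_left:
  "tmul q (\<lambda>m. f m - g m) h m = tmul q f h m - tmul q g h m"
  unfolding tmul_def by (simp add: sum_subtractf left_diff_distrib)

abbreviation tau_minus :: "nat \<Rightarrow> 'a::field \<Rightarrow> nat \<Rightarrow> 'a" where
  "tau_minus k a \<equiv> (\<lambda>m. tmon 1 k m + tmon (-a) 0 m)"

abbreviation trinomial :: "nat \<Rightarrow> 'a::field \<Rightarrow> nat \<Rightarrow> nat \<Rightarrow> 'a" where
  "trinomial n c j \<equiv> (\<lambda>m. tmon (-1) n m + tmon c j m + tmon 1 0 m)"

lemma tmul_tau_minus_left:
  fixes f :: "nat \<Rightarrow> 'a::field"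
  assumes "k \<ge> 1"
  shows "tmul q (tau_minus k a) f m
       = -a * f m + (if k \<le> m then f (m - k) ^ (q ^ k) else 0)"
proof -
  have "tmul q (tau_minus k a) f m
     = (\<Sum>i\<le>m. (if i = 0 then -a * f m else 0) + (if i = k then f (m - k) ^ (q ^ k) else 0))"
    unfolding tmul_def
    by (rule sum.cong[OF refl]) (use assms in \<open>auto simp: tmon_def\<close>)
  also have "\<dots> = -a * f m + (if k \<le> m then f (m - k) ^ (q ^ k) else 0)"
    by (simp add: sum.distrib)
  finally show ?thesis .
qed

text \<open>Coefficients of f (tau^k - a): here the constant -a is twisted, giving
  -f_m a^(q^m), which uses that the q-power map commutes with negation.\<close>
lemma tmul_tau_minus_right:
  fixes f :: "nat \<Rightarrow> 'a::field"
  assumes Fq: "contains_Fq q TYPE('a)" and "k \<ge> 1"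
  shows "tmul q f (tau_minus k a) m
       = (if k \<le> m then f (m - k) else 0) - f m * a ^ (q ^ m)"
proof -
  have "tmul q f (tau_minus k a) m
     = (\<Sum>i\<le>m. (if i = m - k \<and> k \<le> m then f i else 0) + (if i = m then - (f m * a ^ (q ^ m)) else 0))"
    unfolding tmul_def
    by (rule sum.cong[OF refl])
       (use assms Fq_pos[OF Fq] minus_power_Fq[OF Fq] in \<open>auto simp: tmon_def\<close>)
  also have "\<dots> = (if k \<le> m then f (m - k) else 0) - f m * a ^ (q ^ m)"
    by (simp add: sum.distrib)
  finally show ?thesis .
qed

text \<open>Rigidity: if d is a nonzero twisted polynomial, then d (tau^k - a) has nonzero
  coefficients at the lowest index of d and at k plus its highest index; these differ,
  so d (tau^k - a) cannot be concentrated in a single degree j.\<close>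
lemma tau_minus_right_concentrated:
  fixes d :: "nat \<Rightarrow> 'a::field"
  assumes Fq: "contains_Fq q TYPE('a)" and k: "k \<ge> 1" and a: "a \<noteq> 0"
    and d: "is_tpoly d"
    and conc: "\<And>m. m \<noteq> j \<Longrightarrow> tmul q d (tau_minus k a) m = 0"
  shows "d = (\<lambda>_. 0)"
proof (rule ccontr)
  note coeff = tmul_tau_minus_right[OF Fq k]
  define S where "S = {i. d i \<noteq> 0}"
  assume "d \<noteq> (\<lambda>_. 0)"
  then have S: "finite S" "S \<noteq> {}"
    using d by (auto simp: S_def is_tpoly_def)
  define lo where "lo = Min S"
  define hi where "hi = Max S"
  have lo: "d lo \<noteq> 0" and hi: "d hi \<noteq> 0" and "lo \<le> hi"
    using Min_in[OF S] Max_in[OF S] Min_le[OF S(1) Max_in[OF S]]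
    by (auto simp: lo_def hi_def S_def)
  have below_lo: "d i = 0" if "i < lo" for i
    using Min_le[OF S(1), of i] that by (force simp: lo_def S_def)
  have above_hi: "d i = 0" if "hi < i" for i
    using Max_ge[OF S(1), of i] that by (force simp: hi_def S_def)
  have "tmul q d (tau_minus k a) lo = - d lo * a ^ (q ^ lo)"
    using coeff below_lo k by auto
  then have "lo = j"
    using conc[of lo] lo a by auto
  moreover have "tmul q d (tau_minus k a) (hi + k) = d hi"
    using coeff above_hi k by simp
  then have "hi + k = j"
    using conc[of "hi + k"] hi by auto
  ultimately show False
    using \<open>lo \<le> hi\<close> k by simp
qed

lemma isogeny_defect:
  fixes g a h :: "'a::field"
  assumes Fq: "contains_Fq q TYPE('a)"
    and "1 \<le> j" "j < n" "k = n - j"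
    and h: "h = - (a ^ (q ^ n)) + a + g ^ (q ^ k)"
  shows "tmul q (tau_minus k a) (trinomial n g j) m - tmul q (trinomial n h j) (tau_minus k a) m
       = (if m = j then h * a ^ (q ^ j) - a * g else 0)"
proof -
  have k: "k \<ge> 1" "n = j + k" "j \<noteq> 0" "n \<noteq> j" "n \<noteq> 0"
    using assms by auto
  define phi where "phi = trinomial n g j"
  define psi where "psi = trinomial n h j"
  have phi: "phi m = (if m = n then -1 else if m = j then g else if m = 0 then 1 else 0)" for m
    using k by (simp add: phi_def tmon_def)
  have psi: "psi m = (if m = n then -1 else if m = j then h else if m = 0 then 1 else 0)" for m
    using k by (simp add: psi_def tmon_def)
  have frob: "(-1::'a) ^ (q ^ k) = -1" "q > 0"
    using minus_one_power_Fq[OF Fq] Fq_pos[OF Fq] by auto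
  have "tmul q (tau_minus k a) phi m - tmul q psi (tau_minus k a) m
      = -a * phi m + (if k \<le> m then phi (m - k) ^ (q ^ k) else 0)
        - ((if k \<le> m then psi (m - k) else 0) - psi m * a ^ (q ^ m))"
    by (simp only: tmul_tau_minus_left[OF k(1)] tmul_tau_minus_right[OF Fq k(1)])
  also have "\<dots> = (if m = j then h * a ^ (q ^ j) - a * g else 0)"
  proof -
    consider (top) "m = n + k" | (deg_n) "m = n" | (deg_j) "m = j" | (deg_k) "m = k" "k \<noteq> j"
      | (const) "m = 0" | (other) "m \<notin> {n + k, n, j, k, 0}"
      by auto
    then show ?thesis
    proof cases
      case top
      then show ?thesis using k frob by (simp add: phi psi)
    next
      case deg_n
      then show ?thesis using k frob by (simp add: phi psi h)
    next
      case deg_j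
      have "j - k \<noteq> n" "j - k = 0 \<or> j - k \<noteq> j \<or> \<not> k \<le> j"
        using k by auto
      then show ?thesis
        using deg_j k frob by (auto simp: phi psi)
    next
      case deg_k
      then show ?thesis using k frob by (simp add: phi psi)
    next
      case const
      then show ?thesis using k by (simp add: phi psi)
    next
      case other
      then have "m - k \<notin> {n, j, 0} \<or> \<not> k \<le> m"
        using k by auto
      then show ?thesis
        using other frob by (auto simp: phi psi)
    qed
  qed
  finally show ?thesis
    by (simp only: phi_def psi_def)
qed

lemma drinfeld_trinomial:
  assumes "0 < j" "j < n"
  shows "drinfeld_T (trinomial n c j)"
proof -
  have "is_tpoly (trinomial n c j)"
    by (intro is_tpoly_add is_tpoly_tmon)
  moreover have "trinomial n c j 0 = 1"
    using assms by (simp add: tmon_def)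
  moreover have "trinomial n c j n \<noteq> tmon 1 0 n"
    using assms by (simp add: tmon_def)
  then have "trinomial n c j \<noteq> tmon 1 0"
    by metis
  ultimately show ?thesis
    unfolding drinfeld_T_def by blast
qed

text \<open>Uniqueness of the target: if the defect lambda phi_T - psi0 lambda is E tau^j, then
  any target psi_T of the isogeny lambda = tau^k - a equals psi0, and E = 0, because
  (psi_T - psi0) lambda is concentrated in degree j.\<close>
lemma isogeny_target_unique:
  fixes psiT psi0 phiT :: "nat \<Rightarrow> 'a::field"
  assumes Fq: "contains_Fq q TYPE('a)" and k: "k \<ge> 1" and a: "a \<noteq> 0"
    and tpoly: "is_tpoly psiT" "is_tpoly psi0"
    and defect: "\<And>m. tmul q (tau_minus k a) phiT m - tmul q psi0 (tau_minus k a) m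
                      = (if m = j then E else 0)"
    and isog: "tmul q (tau_minus k a) phiT = tmul q psiT (tau_minus k a)"
  shows "psiT = psi0" and "E = 0"
proof -
  have diff: "tmul q (\<lambda>m. psiT m - psi0 m) (tau_minus k a) m = (if m = j then E else 0)" for m
    using defect[of m] isog by (simp add: tmul_diff_left)
  have "(\<lambda>m. psiT m - psi0 m) = (\<lambda>_. 0)"
    by (rule tau_minus_right_concentrated[OF Fq k a is_tpoly_diff[OF tpoly], where j = j])
       (simp add: diff)
  then show "psiT = psi0"
    by (simp add: fun_eq_iff)
  then show "E = 0"
    using diff[of j] by (simp add: tmul_def)
qed

lemma condition_iff_defect:
  fixes a g :: "'a::field"
  assumes "a \<noteq> 0" "q > 0"
  shows "(1 / a) * g ^ (q ^ k) - (1 / a ^ (q ^ j)) * g - a ^ (q ^ n - 1) + 1 = 0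
     \<longleftrightarrow> (- (a ^ (q ^ n)) + a + g ^ (q ^ k)) * a ^ (q ^ j) - a * g = 0"
proof -
  have "a ^ (q ^ n - 1) = a ^ (q ^ n) / a"
    using assms by (simp add: power_diff)
  then have "(1 / a) * g ^ (q ^ k) - (1 / a ^ (q ^ j)) * g - a ^ (q ^ n - 1) + 1
      = ((- (a ^ (q ^ n)) + a + g ^ (q ^ k)) * a ^ (q ^ j) - a * g) / (a * a ^ (q ^ j))"
    using assms by (simp add: field_simps)
  then show ?thesis
    using assms by simp
qed

theorem proposition4p1:
  fixes q n j k :: nat and g a :: "'a::field"
  assumes "contains_Fq q TYPE('a)"
    and "1 \<le> j" and "j < n" and "gcd n j = 1" and "k = n - j"
    and "a \<noteq> 0"
  defines "phiT \<equiv> (\<lambda>m. tmon (-1) n m + tmon g j m + tmon 1 0 m)"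
    and "lam \<equiv> (\<lambda>m. tmon 1 k m + tmon (-a) 0 m)"
  shows "((\<exists>psiT. drinfeld_T psiT \<and> is_isogeny q lam phiT psiT) \<longleftrightarrow>
           (1 / a) * g ^ (q ^ k) - (1 / a ^ (q ^ j)) * g - a ^ (q ^ n - 1) + 1 = 0)
       \<and> (\<forall>psiT. drinfeld_T psiT \<and> is_isogeny q lam phiT psiT \<longrightarrow>
           psiT = (\<lambda>m. tmon (-1) n m
                      + tmon (- (a ^ (q ^ n)) + a + g ^ (q ^ k)) j m + tmon 1 0 m))"
proof -
  define h where "h = - (a ^ (q ^ n)) + a + g ^ (q ^ k)"
  define E where "E = h * a ^ (q ^ j) - a * g"
  have k: "k \<ge> 1" and j: "0 < j"
    using assms by auto
  have defect: "tmul q lam phiT m - tmul q (trinomial n h j) lam m = (if m = j then E else 0)" for m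
    unfolding phiT_def lam_def E_def using isogeny_defect[OF assms(1-3,5) h_def] .
  have target: "psiT = trinomial n h j \<and> E = 0"
    if "drinfeld_T psiT" "is_isogeny q lam phiT psiT" for psiT
    using isogeny_target_unique[OF assms(1) k assms(6) _ _ defect[unfolded lam_def]] that
      drinfeld_trinomial[OF j assms(3)]
    by (auto simp: drinfeld_T_def is_isogeny_def lam_def)
  have "E = 0 \<Longrightarrow> is_isogeny q lam phiT (trinomial n h j)"
    using defect by (auto simp: is_isogeny_def lam_def fun_eq_iff intro: is_tpoly_add is_tpoly_tmon)
  moreover have "(1 / a) * g ^ (q ^ k) - (1 / a ^ (q ^ j)) * g - a ^ (q ^ n - 1) + 1 = 0 \<longleftrightarrow> E = 0"
    unfolding E_def h_def using condition_iff_defect[OF assms(6) Fq_pos[OF assms(1)]] .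
  ultimately show ?thesis
    using target drinfeld_trinomial[OF j assms(3)] unfolding h_def by blast
qed

end
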